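(* Let $\phi$ be a character (unital algebra homomorphism to $\mathbb K$) of the block-substitution bialgebra $\mathbf{B}$ of noncrossing partitions. Then $\phi$ is invertible in the monoid of characters of $\mathbf{B}$ under convolution if and only if $\phi(I_n)\neq0$ for all $n\geq1$, where $I_n=\{[n]\}$.
   Context: $\mathbb K$ is a field of characteristic zero. Noncrossing partitions of $[n]$: no $a<c<b<d$ with $a,b$ in one block and $c,d$ in another; partitions of finite linearly ordered sets are identified with partitions of $[m]$ via the order-preserving bijection; $P_{|X}$ is the induced partition on $X$. $\mathbf{B}$ is the free commutative unital algebra generated by nonempty noncrossing partitions. For noncrossing $P\leq Q$ of $[n]$ (each block of $Q$ a union of blocks of $P$), $Q=\{\tau_1,\dots,\tau_l\}$, put $P/Q=P_{|\tau_1}\cdots P_{|\tau_l}$. The coproduct is $\delta(P)=\sum_{Q\geq P\text{ noncrossing}}Q\otimes P/Q$, extended multiplicatively; counit $\varepsilon(P)=1$ if $P$ has one block and $0$ otherwise. The convolution of characters is $\phi*\psi=m_{\mathbb K}\circ(\phi\otimes\psi)\circ\delta$, with unit $\varepsilon$. *)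

theory Defs
  imports Main "HOL-Library.Multiset"
begin

definition is_partition :: "nat \<Rightarrow> nat set set \<Rightarrow> bool" where
  "is_partition n P \<longleftrightarrow> (\<forall>B\<in>P. B \<noteq> {}) \<and>
     (\<forall>B\<in>P. \<forall>C\<in>P. B \<noteq> C \<longrightarrow> B \<inter> C = {}) \<and> \<Union>P = {1..n}"

definition noncrossing :: "nat set set \<Rightarrow> bool" where
  "noncrossing P \<longleftrightarrow> \<not> (\<exists>B\<in>P. \<exists>C\<in>P. B \<noteq> C \<and>
     (\<exists>a b c d. a \<in> B \<and> b \<in> B \<and> c \<in> C \<and> d \<in> C \<and> a < c \<and> c < b \<and> b < d))"

definition NC :: "nat \<Rightarrow> nat set set \<Rightarrow> bool" where
  "NC n P \<longleftrightarrow> is_partition n P \<and> noncrossing P"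

text \<open>Generators of B: nonempty noncrossing partitions (of [n], n \<ge> 1).\<close>
definition nc_gen :: "nat set set \<Rightarrow> bool" where
  "nc_gen P \<longleftrightarrow> (\<exists>n\<ge>1. NC n P)"

text \<open>Monomials of the free commutative algebra B: finite multisets of generators
  (the empty multiset is the unit).\<close>
definition monomial :: "nat set set multiset \<Rightarrow> bool" where
  "monomial M \<longleftrightarrow> (\<forall>P\<in>#M. nc_gen P)"

definition psize :: "nat set set \<Rightarrow> nat" where
  "psize P = card (\<Union>P)"

definition refines :: "nat set set \<Rightarrow> nat set set \<Rightarrow> bool" where
  "refines P Q \<longleftrightarrow> (\<forall>B\<in>P. \<exists>C\<in>Q. B \<subseteq> C)"

text \<open>Order-preserving bijection from a finite X \<subseteq> nat onto {1..card X}.\<close>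
definition std :: "nat set \<Rightarrow> nat \<Rightarrow> nat" where
  "std X x = card {y\<in>X. y \<le> x}"

text \<open>Induced partition P|X, relabelled to a partition of [card X].\<close>
definition restr :: "nat set set \<Rightarrow> nat set \<Rightarrow> nat set set" where
  "restr P X = {std X ` (B \<inter> X) | B. B \<in> P \<and> B \<inter> X \<noteq> {}}"

definition quot :: "nat set set \<Rightarrow> nat set set \<Rightarrow> nat set set multiset" where
  "quot P Q = image_mset (restr P) (mset_set Q)"

text \<open>Convolution of characters phi * psi = m o (phi \<otimes> psi) o delta, evaluated on a
  monomial; delta is multiplicative and phi, psi are characters, so this is the product
  over the factors P of sum over noncrossing Q \<ge> P of phi(Q) psi(P/Q).\<close>
definition conv :: "(nat set set multiset \<Rightarrow> 'a::field_char_0) \<Rightarrow> (nat set set multiset \<Rightarrow> 'a)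
    \<Rightarrow> nat set set multiset \<Rightarrow> 'a" where
  "conv \<phi> \<psi> M = (\<Prod>P\<in>#M. \<Sum>Q\<in>{Q. NC (psize P) Q \<and> refines P Q}. \<phi> {#Q#} * \<psi> (quot P Q))"

definition counit :: "nat set set multiset \<Rightarrow> 'a::field_char_0" where
  "counit M = (\<Prod>P\<in>#M. if card P = 1 then 1 else 0)"

text \<open>Characters: unital algebra homomorphisms B \<rightarrow> K, given by their values on the
  monomial basis (linear extension), i.e. unital and multiplicative on monomials.\<close>
definition is_char :: "(nat set set multiset \<Rightarrow> 'a::field_char_0) \<Rightarrow> bool" where
  "is_char \<phi> \<longleftrightarrow> \<phi> {#} = 1 \<and>
     (\<forall>M N. monomial M \<longrightarrow> monomial N \<longrightarrow> \<phi> (M + N) = \<phi> M * \<phi> N)"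

text \<open>Invertibility in the monoid of characters (equality of characters = equality on B,
  i.e. on all monomials).\<close>
definition char_invertible :: "(nat set set multiset \<Rightarrow> 'a::field_char_0) \<Rightarrow> bool" where
  "char_invertible \<phi> \<longleftrightarrow> (\<exists>\<psi>. is_char \<psi> \<and>
     (\<forall>M. monomial M \<longrightarrow> conv \<phi> \<psi> M = counit M \<and> conv \<psi> \<phi> M = counit M))"

end

theory Submission
  imports Defs "HOL-Library.FuncSet"
begin

text \<open>
  Characters and the convolution of characters are multiplicative, so it suffices to look at
  a generator P of [n]. Its coproduct runs over the noncrossing coarsenings Q of P; the
  one-block coarsening contributes \<open>\<phi>(I\<^sub>n) \<psi>(P)\<close>, while for every other Q the monomial
  P/Q is a product of partitions of fewer than n points. Hence
  \<open>(\<phi> * \<psi>)(I\<^sub>n) = \<phi>(I\<^sub>n) \<psi>(I\<^sub>n)\<close>, which makes the condition necessary, and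
  conversely \<open>\<phi> * \<psi> = \<epsilon>\<close> can be solved for \<open>\<psi>(P)\<close> by recursion on n. The right
  inverse \<psi> obtained this way again satisfies the condition, so it has a right inverse \<chi>, and
  associativity gives \<open>\<phi> = \<phi> * (\<psi> * \<chi>) = (\<phi> * \<psi>) * \<chi> = \<chi>\<close>.
  Associativity comes down to a bijection: the partitions Q with \<open>P \<le> Q \<le> R\<close> correspond,
  by restriction to the blocks \<rho> of R, to the families of coarsenings of the restrictions
  \<open>P|\<^sub>\<rho>\<close>.
\<close>

section \<open>Order-preserving relabelling\<close>

lemma strict_mono_on_std: "finite X \<Longrightarrow> strict_mono_on X (std X)"
proof (rule monotone_onI)
  fix x y assume "finite X" "x \<in> X" "y \<in> X" "x < y"
  then have "{z\<in>X. z \<le> x} \<subset> {z\<in>X. z \<le> y}"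
    by (intro psubsetI) (auto simp: set_eq_iff intro!: exI[of _ y])
  with \<open>finite X\<close> show "std X x < std X y"
    unfolding std_def by (intro psubset_card_mono) auto
qed

lemma std_less_iff: "finite X \<Longrightarrow> x \<in> X \<Longrightarrow> y \<in> X \<Longrightarrow> std X x < std X y \<longleftrightarrow> x < y"
  by (rule strict_mono_on_less[OF strict_mono_on_std])

lemma std_le_iff: "finite X \<Longrightarrow> x \<in> X \<Longrightarrow> y \<in> X \<Longrightarrow> std X x \<le> std X y \<longleftrightarrow> x \<le> y"
  by (rule strict_mono_on_less_eq[OF strict_mono_on_std])

lemma inj_on_std: "finite X \<Longrightarrow> inj_on (std X) X"
  by (rule strict_mono_on_imp_inj_on[OF strict_mono_on_std])

lemma std_in_atLeastAtMost: "finite X \<Longrightarrow> x \<in> X \<Longrightarrow> std X x \<in> {1..card X}"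
  unfolding std_def by (auto simp: Suc_le_eq card_gt_0_iff intro!: card_mono)

lemma std_image: "finite X \<Longrightarrow> std X ` X = {1..card X}"
  by (intro card_subset_eq image_subsetI std_in_atLeastAtMost) (simp_all add: card_image inj_on_std)

lemma std_atLeastAtMost:
  assumes "x \<in> {1..n}"
  shows "std {1..n} x = x"
proof -
  have "{y\<in>{1..n}. y \<le> x} = {1..x}"
    using assms by auto
  then show ?thesis
    unfolding std_def by simp
qed

lemma std_std_image:
  assumes "finite X" "Y \<subseteq> X" "y \<in> Y"
  shows "std (std X ` Y) (std X y) = std Y y"
proof -
  have "{w \<in> std X ` Y. w \<le> std X y} = std X ` {z\<in>Y. z \<le> y}"
    using assms std_le_iff[OF assms(1)] by (fastforce simp: subset_iff)
  moreover have "inj_on (std X) {z\<in>Y. z \<le> y}"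
    using assms by (auto intro: inj_on_subset[OF inj_on_std])
  ultimately show ?thesis
    unfolding std_def[of "std X ` Y"] std_def[of Y] by (simp add: card_image)
qed

definition std_inv :: "nat set \<Rightarrow> nat \<Rightarrow> nat" where
  "std_inv X = the_inv_into X (std X)"

lemma std_inv_in: "finite X \<Longrightarrow> i \<in> {1..card X} \<Longrightarrow> std_inv X i \<in> X"
  unfolding std_inv_def by (metis the_inv_into_into inj_on_std std_image order_refl)

lemma std_std_inv: "finite X \<Longrightarrow> i \<in> {1..card X} \<Longrightarrow> std X (std_inv X i) = i"
  unfolding std_inv_def by (metis f_the_inv_into_f inj_on_std std_image)

lemma std_inv_std: "finite X \<Longrightarrow> x \<in> X \<Longrightarrow> std_inv X (std X x) = x"
  unfolding std_inv_def by (metis the_inv_into_f_f inj_on_std)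

lemma strict_mono_on_std_inv:
  assumes "finite X"
  shows "strict_mono_on {1..card X} (std_inv X)"
proof (rule monotone_onI)
  fix i j assume ij: "i \<in> {1..card X}" "j \<in> {1..card X}" "i < j"
  then have "std X (std_inv X i) < std X (std_inv X j)"
    using std_std_inv[OF assms] by simp
  then show "std_inv X i < std_inv X j"
    using std_less_iff[OF assms std_inv_in[OF assms ij(1)] std_inv_in[OF assms ij(2)]] by simp
qed

lemma std_image_std_inv_image:
  assumes "finite X" "\<sigma> \<subseteq> {1..card X}"
  shows "std X ` std_inv X ` \<sigma> = \<sigma>"
proof -
  have "(\<lambda>i. std X (std_inv X i)) ` \<sigma> = \<sigma>"
    using std_std_inv[OF assms(1)] assms(2) by (simp add: subset_iff cong: image_cong)
  then show ?thesis by (simp add: image_image)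
qed

lemma std_inv_image_std_image:
  assumes "finite X" "B \<subseteq> X"
  shows "std_inv X ` std X ` B = B"
proof -
  have "(\<lambda>x. std_inv X (std X x)) ` B = B"
    using std_inv_std[OF assms(1)] assms(2) by (simp add: subset_iff cong: image_cong)
  then show ?thesis by (simp add: image_image)
qed

lemma std_inv_image: "finite X \<Longrightarrow> std_inv X ` {1..card X} = X"
  using std_inv_image_std_image[of X X] std_image[of X] by simp

definition is_partition_on :: "nat set \<Rightarrow> nat set set \<Rightarrow> bool" where
  "is_partition_on X P \<longleftrightarrow> (\<forall>B\<in>P. B \<noteq> {}) \<and>
     (\<forall>B\<in>P. \<forall>C\<in>P. B \<noteq> C \<longrightarrow> B \<inter> C = {}) \<and> \<Union>P = X"

lemma is_partition_on_subset: "is_partition_on X P \<Longrightarrow> B \<in> P \<Longrightarrow> B \<subseteq> X"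
  unfolding is_partition_on_def by blast

lemma is_partition_on_nonempty: "is_partition_on X P \<Longrightarrow> B \<in> P \<Longrightarrow> B \<noteq> {}"
  unfolding is_partition_on_def by blast

lemma is_partition_on_disjoint:
  "is_partition_on X P \<Longrightarrow> B \<in> P \<Longrightarrow> C \<in> P \<Longrightarrow> B \<noteq> C \<Longrightarrow> B \<inter> C = {}"
  unfolding is_partition_on_def by blast

lemma is_partition_on_Union: "is_partition_on X P \<Longrightarrow> \<Union>P = X"
  unfolding is_partition_on_def by blast

lemma is_partition_on_eq:
  "is_partition_on X P \<Longrightarrow> B \<in> P \<Longrightarrow> C \<in> P \<Longrightarrow> x \<in> B \<Longrightarrow> x \<in> C \<Longrightarrow> B = C"
  unfolding is_partition_on_def by blast

lemma finite_is_partition_on: "is_partition_on X P \<Longrightarrow> finite X \<Longrightarrow> finite P"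
  by (metis is_partition_on_Union finite_UnionD)

lemma is_partition_on_image:
  assumes "is_partition_on X P" "inj_on f X"
  shows "is_partition_on (f ` X) ((`) f ` P)"
  unfolding is_partition_on_def
proof (intro conjI ballI impI)
  fix B' assume "B' \<in> (`) f ` P"
  then show "B' \<noteq> {}" using is_partition_on_nonempty[OF assms(1)] by blast
next
  fix B' C' assume "B' \<in> (`) f ` P" "C' \<in> (`) f ` P" "B' \<noteq> C'"
  then obtain B C where B: "B \<in> P" "B' = f ` B" and C: "C \<in> P" "C' = f ` C"
    by blast
  with \<open>B' \<noteq> C'\<close> have "B \<inter> C = {}"
    using is_partition_on_disjoint[OF assms(1) B(1) C(1)] by blast
  then have "f ` (B \<inter> C) = {}" by simp
  then show "B' \<inter> C' = {}"
    unfolding B C inj_on_image_Int[OF assms(2) is_partition_on_subset[OF assms(1) B(1)]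
      is_partition_on_subset[OF assms(1) C(1)]] .
next
  show "\<Union>((`) f ` P) = f ` X"
    using is_partition_on_Union[OF assms(1)] by blast
qed

lemma is_partition_on_UN:
  assumes "is_partition_on X R" "\<And>\<rho>. \<rho> \<in> R \<Longrightarrow> is_partition_on \<rho> (G \<rho>)"
  shows "is_partition_on X (\<Union>\<rho>\<in>R. G \<rho>)"
  unfolding is_partition_on_def
proof (intro conjI ballI impI)
  fix B assume "B \<in> (\<Union>\<rho>\<in>R. G \<rho>)"
  then show "B \<noteq> {}" using is_partition_on_nonempty[OF assms(2)] by blast
next
  fix B C assume "B \<in> (\<Union>\<rho>\<in>R. G \<rho>)" "C \<in> (\<Union>\<rho>\<in>R. G \<rho>)" "B \<noteq> C"
  then obtain \<rho> \<rho>' where B: "\<rho> \<in> R" "B \<in> G \<rho>" and C: "\<rho>' \<in> R" "C \<in> G \<rho>'"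
    by blast
  show "B \<inter> C = {}"
  proof (cases "\<rho> = \<rho>'")
    case True
    then show ?thesis
      using is_partition_on_disjoint[OF assms(2)[OF B(1)] B(2)] C(2) \<open>B \<noteq> C\<close> by simp
  next
    case False
    then have "\<rho> \<inter> \<rho>' = {}"
      by (rule is_partition_on_disjoint[OF assms(1) B(1) C(1)])
    moreover have "B \<subseteq> \<rho>" "C \<subseteq> \<rho>'"
      using is_partition_on_subset[OF assms(2)[OF B(1)] B(2)]
        is_partition_on_subset[OF assms(2)[OF C(1)] C(2)] .
    ultimately show ?thesis by blast
  qed
next
  have "\<Union>(\<Union>\<rho>\<in>R. G \<rho>) = (\<Union>\<rho>\<in>R. \<Union>(G \<rho>))"
    by blast
  also have "\<dots> = \<Union>R"
    using is_partition_on_Union[OF assms(2)] by simp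
  finally show "\<Union>(\<Union>\<rho>\<in>R. G \<rho>) = X"
    using is_partition_on_Union[OF assms(1)] by simp
qed

lemma noncrossingI:
  assumes "\<And>B C a b c d. B \<in> P \<Longrightarrow> C \<in> P \<Longrightarrow> a \<in> B \<Longrightarrow> b \<in> B \<Longrightarrow> c \<in> C \<Longrightarrow> d \<in> C \<Longrightarrow>
      a < c \<Longrightarrow> c < b \<Longrightarrow> b < d \<Longrightarrow> B = C"
  shows "noncrossing P"
  unfolding noncrossing_def
proof (intro notI, elim bexE exE conjE)
  fix B C a b c d
  assume "B \<in> P" "C \<in> P" "B \<noteq> C" "a \<in> B" "b \<in> B" "c \<in> C" "d \<in> C" "a < c" "c < b" "b < d"
  then show False using assms[of B C a b c d] by simp
qed

lemma noncrossingD: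
  assumes "noncrossing P" "B \<in> P" "C \<in> P" "a \<in> B" "b \<in> B" "c \<in> C" "d \<in> C" "a < c" "c < b" "b < d"
  shows "B = C"
proof (rule ccontr)
  assume "B \<noteq> C"
  with assms(2-) have "\<exists>B\<in>P. \<exists>C\<in>P. B \<noteq> C \<and>
      (\<exists>a b c d. a \<in> B \<and> b \<in> B \<and> c \<in> C \<and> d \<in> C \<and> a < c \<and> c < b \<and> b < d)"
    by (intro bexI[of _ B] bexI[of _ C]) auto
  with assms(1) show False unfolding noncrossing_def by (rule notE)
qed

lemma noncrossing_subset:
  assumes "noncrossing P" "Q \<subseteq> P"
  shows "noncrossing Q"
proof (rule noncrossingI)
  fix B C a b c d
  assume "B \<in> Q" "C \<in> Q" "a \<in> B" "b \<in> B" "c \<in> C" "d \<in> C" "a < c" "c < b" "b < d"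
  with assms(2) show "B = C"
    using noncrossingD[OF assms(1), of B C a b c d] by blast
qed

lemma noncrossing_Int:
  assumes "noncrossing P"
  shows "noncrossing ((\<lambda>B. B \<inter> X) ` P)"
proof (rule noncrossingI)
  fix B' C' a b c d
  assume "B' \<in> (\<lambda>B. B \<inter> X) ` P" "C' \<in> (\<lambda>B. B \<inter> X) ` P"
    and "a \<in> B'" "b \<in> B'" "c \<in> C'" "d \<in> C'" "a < c" "c < b" "b < d"
  moreover from this obtain B C where "B \<in> P" "B' = B \<inter> X" "C \<in> P" "C' = C \<inter> X"
    by blast
  ultimately show "B' = C'"
    using noncrossingD[OF assms, of B C a b c d] by simp
qed

lemma noncrossing_image:
  assumes "noncrossing P" "strict_mono_on (\<Union>P) f"
  shows "noncrossing ((`) f ` P)"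
proof (rule noncrossingI)
  fix B' C' a' b' c' d'
  assume "B' \<in> (`) f ` P" "C' \<in> (`) f ` P" and pts: "a' \<in> B'" "b' \<in> B'" "c' \<in> C'" "d' \<in> C'"
    and order: "a' < c'" "c' < b'" "b' < d'"
  then obtain B C where B: "B \<in> P" "B' = f ` B" and C: "C \<in> P" "C' = f ` C"
    by blast
  with pts obtain a b c d where "a \<in> B" "b \<in> B" "c \<in> C" "d \<in> C"
    and "a' = f a" "b' = f b" "c' = f c" "d' = f d"
    by blast
  moreover from this have "a < c" "c < b" "b < d"
    using order strict_mono_on_less[OF assms(2)] B(1) C(1) by auto
  ultimately have "B = C"
    using noncrossingD[OF assms(1) B(1) C(1)] by blast
  then show "B' = C'" using B C by simp
qed

lemma noncrossing_UN:
  assumes "noncrossing R" "\<And>\<rho>. \<rho> \<in> R \<Longrightarrow> noncrossing (G \<rho>)"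
    and "\<And>\<rho> \<tau>. \<rho> \<in> R \<Longrightarrow> \<tau> \<in> G \<rho> \<Longrightarrow> \<tau> \<subseteq> \<rho>"
  shows "noncrossing (\<Union>\<rho>\<in>R. G \<rho>)"
proof (rule noncrossingI)
  fix B C a b c d
  assume "B \<in> (\<Union>\<rho>\<in>R. G \<rho>)" "C \<in> (\<Union>\<rho>\<in>R. G \<rho>)" and pts: "a \<in> B" "b \<in> B" "c \<in> C" "d \<in> C"
    and order: "a < c" "c < b" "b < d"
  then obtain \<rho> \<rho>' where B: "\<rho> \<in> R" "B \<in> G \<rho>" and C: "\<rho>' \<in> R" "C \<in> G \<rho>'"
    by blast
  have "a \<in> \<rho>" "b \<in> \<rho>" "c \<in> \<rho>'" "d \<in> \<rho>'"
    using assms(3)[OF B] assms(3)[OF C] pts by (simp_all add: subset_iff)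
  then have "\<rho> = \<rho>'"
    using noncrossingD[OF assms(1) B(1) C(1) _ _ _ _ order] by simp
  then show "B = C"
    using noncrossingD[OF assms(2)[OF B(1)] B(2) _ pts order] C(2) by simp
qed

lemma NC_iff: "NC n P \<longleftrightarrow> is_partition_on {1..n} P \<and> noncrossing P"
  unfolding NC_def is_partition_def is_partition_on_def ..

lemma NC_is_partition_on: "NC n P \<Longrightarrow> is_partition_on {1..n} P"
  by (simp add: NC_iff)

lemma NC_noncrossing: "NC n P \<Longrightarrow> noncrossing P"
  by (simp add: NC_iff)

lemma NC_subset: "NC n P \<Longrightarrow> B \<in> P \<Longrightarrow> B \<subseteq> {1..n}"
  by (rule is_partition_on_subset[OF NC_is_partition_on])

lemma NC_nonempty: "NC n P \<Longrightarrow> B \<in> P \<Longrightarrow> B \<noteq> {}"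
  by (rule is_partition_on_nonempty[OF NC_is_partition_on])

lemma NC_finite_block: "NC n P \<Longrightarrow> B \<in> P \<Longrightarrow> finite B"
  by (rule finite_subset[OF NC_subset]) simp_all

lemma finite_NC: "NC n P \<Longrightarrow> finite P"
  by (rule finite_is_partition_on[OF NC_is_partition_on]) simp_all

lemma psize_NC: "NC n P \<Longrightarrow> psize P = n"
  unfolding psize_def using is_partition_on_Union[OF NC_is_partition_on] by fastforce

lemma nc_genD: "nc_gen P \<Longrightarrow> NC (psize P) P \<and> psize P \<ge> 1"
  unfolding nc_gen_def using psize_NC by blast

lemma NC_single_block:
  assumes "n \<ge> 1"
  shows "NC n {{1..n}}"
proof -
  have "noncrossing {{1..n}}"
    by (rule noncrossingI) simp
  then show ?thesis
    using assms unfolding NC_iff is_partition_on_def by simp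
qed

lemma NC_eq_single_block:
  assumes "NC n Q" "C \<in> Q" "{1..n} \<subseteq> C"
  shows "Q = {{1..n}}"
proof -
  have C: "C = {1..n}"
    using NC_subset[OF assms(1,2)] assms(3) by (rule subset_antisym)
  have "D = C" if D: "D \<in> Q" for D
  proof -
    obtain x where "x \<in> D" using NC_nonempty[OF assms(1) D] by blast
    moreover from this have "x \<in> C"
      using NC_subset[OF assms(1) D] C by blast
    ultimately show "D = C"
      by (rule is_partition_on_eq[OF NC_is_partition_on[OF assms(1)] D assms(2)])
  qed
  then show ?thesis
    using assms(2) C by blast
qed

lemma psize_single_block: "psize {{1..n}} = n"
  unfolding psize_def by simp

lemma NC_card_eq_1: "NC n Q \<Longrightarrow> card Q = 1 \<longleftrightarrow> Q = {{1..n}}"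
  using is_partition_on_Union[OF NC_is_partition_on] by (fastforce simp: card_1_singleton_iff)

section \<open>Restriction to a subset\<close>

lemma restr_eq_image: "restr P X = (\<lambda>B. std X ` (B \<inter> X)) ` {B\<in>P. B \<inter> X \<noteq> {}}"
  unfolding restr_def by blast

lemma restr_is_partition_on:
  assumes "finite X" "is_partition_on X0 P" "X \<subseteq> X0"
  shows "is_partition_on {1..card X} (restr P X)"
  unfolding is_partition_on_def
proof (intro conjI ballI impI)
  fix b assume "b \<in> restr P X"
  then show "b \<noteq> {}" unfolding restr_def by blast
next
  fix b c assume "b \<in> restr P X" "c \<in> restr P X" "b \<noteq> c"
  then obtain B C where B: "B \<in> P" "b = std X ` (B \<inter> X)" and C: "C \<in> P" "c = std X ` (C \<inter> X)"
    unfolding restr_def by blast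
  with \<open>b \<noteq> c\<close> have "B \<inter> C = {}"
    using is_partition_on_disjoint[OF assms(2)] by metis
  then have "(B \<inter> X) \<inter> (C \<inter> X) = {}" by blast
  then show "b \<inter> c = {}"
    unfolding B C inj_on_image_Int[OF inj_on_std[OF assms(1)] Int_lower2 Int_lower2, symmetric]
    by simp
next
  have "\<Union>(restr P X) = std X ` (\<Union>P \<inter> X)"
    unfolding restr_def by blast
  also have "\<Union>P \<inter> X = X"
    using is_partition_on_Union[OF assms(2)] assms(3) by blast
  finally show "\<Union>(restr P X) = {1..card X}"
    using std_image[OF assms(1)] by simp
qed

lemma noncrossing_restr:
  assumes "finite X" "noncrossing P"
  shows "noncrossing (restr P X)"
proof -
  have "restr P X = (`) (std X) ` (\<lambda>B. B \<inter> X) ` {B\<in>P. B \<inter> X \<noteq> {}}"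
    unfolding restr_eq_image by (simp add: image_image)
  moreover have "strict_mono_on (\<Union>((\<lambda>B. B \<inter> X) ` {B\<in>P. B \<inter> X \<noteq> {}})) (std X)"
    by (rule monotone_on_subset[OF strict_mono_on_std[OF assms(1)]]) blast
  moreover have "noncrossing ((\<lambda>B. B \<inter> X) ` {B\<in>P. B \<inter> X \<noteq> {}})"
    by (rule noncrossing_Int[OF noncrossing_subset[OF assms(2)]]) blast
  ultimately show ?thesis
    using noncrossing_image by simp
qed

lemma NC_restr:
  assumes "NC n P" "X \<subseteq> {1..n}"
  shows "NC (card X) (restr P X)"
proof -
  have "finite X" using assms(2) finite_subset by blast
  then show ?thesis
    using restr_is_partition_on[OF _ NC_is_partition_on[OF assms(1)] assms(2)]
      noncrossing_restr[OF _ NC_noncrossing[OF assms(1)]]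
    by (simp add: NC_iff)
qed

lemma psize_restr: "NC n P \<Longrightarrow> X \<subseteq> {1..n} \<Longrightarrow> psize (restr P X) = card X"
  by (rule psize_NC[OF NC_restr])

lemma psize_restr_le:
  assumes "finite X"
  shows "psize (restr P X) \<le> card X"
proof -
  have "\<Union>(restr P X) \<subseteq> std X ` X"
    unfolding restr_def by blast
  then have "psize (restr P X) \<le> card (std X ` X)"
    unfolding psize_def using assms by (intro card_mono) simp_all
  then show ?thesis
    using std_image[OF assms] by simp
qed

lemma nc_gen_restr:
  assumes "NC n P" "X \<subseteq> {1..n}" "X \<noteq> {}"
  shows "nc_gen (restr P X)"
proof -
  have "card X \<ge> 1"
    using assms(2,3) finite_subset by (fastforce simp: Suc_le_eq card_gt_0_iff)
  then show ?thesis
    unfolding nc_gen_def using NC_restr[OF assms(1,2)] by blast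
qed

lemma restr_atLeastAtMost:
  assumes "NC n P"
  shows "restr P {1..n} = P"
proof -
  have "{B\<in>P. B \<inter> {1..n} \<noteq> {}} = P"
    using NC_subset[OF assms] NC_nonempty[OF assms] by blast
  moreover have "std {1..n} ` (B \<inter> {1..n}) = B" if "B \<in> P" for B
    using NC_subset[OF assms that] std_atLeastAtMost
    by (simp add: Int_absorb2 subset_iff cong: image_cong)
  ultimately show ?thesis
    unfolding restr_eq_image by simp
qed

lemma restr_restr:
  assumes "finite X" "Y \<subseteq> X"
  shows "restr (restr P X) (std X ` Y) = restr P Y"
proof -
  have std_Int: "std X ` (B \<inter> X) \<inter> std X ` Y = std X ` (B \<inter> Y)" for B
  proof -
    have "std X ` (B \<inter> X) \<inter> std X ` Y = std X ` (B \<inter> X \<inter> Y)"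
      using inj_on_image_Int[OF inj_on_std[OF assms(1)], of "B \<inter> X" Y] assms(2) by simp
    also have "B \<inter> X \<inter> Y = B \<inter> Y" using assms(2) by blast
    finally show ?thesis .
  qed
  have std_std: "(\<lambda>y. std (std X ` Y) (std X y)) ` (B \<inter> Y) = std Y ` (B \<inter> Y)" for B
    using std_std_image[OF assms] by (intro image_cong) auto
  have "{B\<in>{B\<in>P. B \<inter> X \<noteq> {}}. std X ` (B \<inter> X) \<inter> std X ` Y \<noteq> {}} = {B\<in>P. B \<inter> Y \<noteq> {}}"
    unfolding std_Int using assms(2) by blast
  then have "{b \<in> restr P X. b \<inter> std X ` Y \<noteq> {}} = (\<lambda>B. std X ` (B \<inter> X)) ` {B\<in>P. B \<inter> Y \<noteq> {}}"
    by (simp add: restr_eq_image[of P X] Compr_image_eq)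
  then show ?thesis
    unfolding restr_eq_image[of "restr P X"] restr_eq_image[of P Y] by (simp add: image_image std_Int std_std)
qed

lemma Union_finer_blocks:
  assumes "is_partition_on X P" "is_partition_on X Q" "refines P Q" "\<tau> \<in> Q"
  shows "\<Union>{B\<in>P. B \<subseteq> \<tau>} = \<tau>"
proof
  show "\<tau> \<subseteq> \<Union>{B\<in>P. B \<subseteq> \<tau>}"
  proof
    fix x assume x: "x \<in> \<tau>"
    obtain B where B: "B \<in> P" "x \<in> B"
      using x is_partition_on_Union[OF assms(1)] is_partition_on_subset[OF assms(2,4)] by blast
    obtain C where C: "C \<in> Q" "B \<subseteq> C"
      using assms(3) B(1) unfolding refines_def by blast
    have "C = \<tau>"
      using B(2) C(2) x by (intro is_partition_on_eq[OF assms(2) C(1) assms(4)]) auto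
    then show "x \<in> \<Union>{B\<in>P. B \<subseteq> \<tau>}"
      using B C by blast
  qed
qed blast

lemma restr_coarser:
  assumes "is_partition_on X Q" "is_partition_on X R" "refines Q R" "\<rho> \<in> R"
  shows "restr Q \<rho> = (`) (std \<rho>) ` {\<tau>\<in>Q. \<tau> \<subseteq> \<rho>}"
proof -
  have meets_iff_subset: "\<tau> \<inter> \<rho> \<noteq> {} \<longleftrightarrow> \<tau> \<subseteq> \<rho>" if \<tau>: "\<tau> \<in> Q" for \<tau>
  proof -
    obtain \<rho>' where \<rho>': "\<rho>' \<in> R" "\<tau> \<subseteq> \<rho>'"
      using assms(3) \<tau> unfolding refines_def by blast
    have "\<tau> \<noteq> {}"
      by (rule is_partition_on_nonempty[OF assms(1) \<tau>])
    show ?thesis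
    proof (cases "\<rho>' = \<rho>")
      case True
      then show ?thesis using \<rho>'(2) \<open>\<tau> \<noteq> {}\<close> by (simp add: Int_absorb2)
    next
      case False
      then have "\<rho>' \<inter> \<rho> = {}"
        by (rule is_partition_on_disjoint[OF assms(2) \<rho>'(1) assms(4)])
      then show ?thesis using \<rho>'(2) \<open>\<tau> \<noteq> {}\<close> by auto
    qed
  qed
  then have "{\<tau>\<in>Q. \<tau> \<inter> \<rho> \<noteq> {}} = {\<tau>\<in>Q. \<tau> \<subseteq> \<rho>}"
    by auto
  then have "restr Q \<rho> = (\<lambda>\<tau>. std \<rho> ` (\<tau> \<inter> \<rho>)) ` {\<tau>\<in>Q. \<tau> \<subseteq> \<rho>}"
    by (simp add: restr_eq_image)
  also have "\<dots> = (`) (std \<rho>) ` {\<tau>\<in>Q. \<tau> \<subseteq> \<rho>}"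
    by (rule image_cong) (auto simp: Int_absorb2)
  finally show ?thesis .
qed

lemma card_restr_coarser:
  assumes "is_partition_on X Q" "is_partition_on X R" "refines Q R" "\<rho> \<in> R" "finite X"
  shows "card (restr Q \<rho>) = card {\<tau>\<in>Q. \<tau> \<subseteq> \<rho>}"
proof -
  have "finite \<rho>"
    using is_partition_on_subset[OF assms(2,4)] assms(5) finite_subset by blast
  then have "inj_on ((`) (std \<rho>)) {\<tau>\<in>Q. \<tau> \<subseteq> \<rho>}"
    by (rule inj_on_subset[OF inj_on_image_Pow[OF inj_on_std]]) blast
  then show ?thesis
    unfolding restr_coarser[OF assms(1-4)] by (rule card_image)
qed

lemma refines_restr:
  assumes "refines P Q"
  shows "refines (restr P X) (restr Q X)"
  unfolding refines_def
proof
  fix b assume "b \<in> restr P X"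
  then obtain B where B: "B \<in> P" "B \<inter> X \<noteq> {}" "b = std X ` (B \<inter> X)"
    unfolding restr_def by blast
  moreover obtain C where "C \<in> Q" "B \<subseteq> C"
    using assms B(1) unfolding refines_def by blast
  ultimately have "std X ` (C \<inter> X) \<in> restr Q X" "b \<subseteq> std X ` (C \<inter> X)"
    unfolding restr_def by blast+
  then show "\<exists>c\<in>restr Q X. b \<subseteq> c" by blast
qed

definition coarsenings :: "nat set set \<Rightarrow> nat set set set" where
  "coarsenings P = {Q. NC (psize P) Q \<and> refines P Q}"

lemma coarseningsD: "Q \<in> coarsenings P \<Longrightarrow> NC (psize P) Q \<and> refines P Q"
  unfolding coarsenings_def by simp

lemma finite_coarsenings: "finite (coarsenings P)"
proof (rule finite_subset)
  show "coarsenings P \<subseteq> Pow (Pow {1..psize P})"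
    unfolding coarsenings_def using NC_subset by blast
qed simp

lemma refines_trans: "refines P Q \<Longrightarrow> refines Q R \<Longrightarrow> refines P R"
  unfolding refines_def by (meson order_trans)

lemma coarsenings_of_coarsening:
  assumes "Q \<in> coarsenings P"
  shows "coarsenings Q = {R\<in>coarsenings P. refines Q R}"
proof -
  have "psize Q = psize P" using psize_NC coarseningsD[OF assms] by blast
  then show ?thesis
    unfolding coarsenings_def using coarseningsD[OF assms] refines_trans by auto
qed

lemma self_in_coarsenings: "nc_gen P \<Longrightarrow> P \<in> coarsenings P"
  unfolding coarsenings_def refines_def using nc_genD by blast

lemma single_block_in_coarsenings:
  assumes "nc_gen P"
  shows "{{1..psize P}} \<in> coarsenings P"
  using nc_genD[OF assms] NC_single_block NC_subset
  unfolding coarsenings_def refines_def by blast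

lemma coarsenings_single_block: "n \<ge> 1 \<Longrightarrow> coarsenings {{1..n}} = {{{1..n}}}"
  unfolding coarsenings_def refines_def psize_single_block
  using NC_eq_single_block NC_single_block by blast

lemma char_eq_prod:
  assumes "is_char c" "monomial M"
  shows "c M = (\<Prod>P\<in>#M. c {#P#})"
  using assms(2)
proof (induction M)
  case empty
  then show ?case using assms(1) unfolding is_char_def by simp
next
  case (add P M)
  then have "monomial {#P#}" "monomial M"
    unfolding monomial_def by simp_all
  then have "c ({#P#} + M) = c {#P#} * c M"
    using assms(1) unfolding is_char_def by blast
  with add.IH \<open>monomial M\<close> show ?case
    by simp
qed

lemma monomial_quot: "NC n P \<Longrightarrow> NC n Q \<Longrightarrow> monomial (quot P Q)"
  unfolding monomial_def quot_def
  using finite_NC nc_gen_restr NC_subset NC_nonempty by auto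

lemma prod_mset_image_mset_set:
  "(\<Prod>x\<in>#image_mset f (mset_set A). g x) = (\<Prod>a\<in>A. g (f a))"
  by (simp add: prod_unfold_prod_mset multiset.map_comp comp_def)

lemma char_quot:
  assumes "is_char c" "NC n P" "NC n Q"
  shows "c (quot P Q) = (\<Prod>\<tau>\<in>Q. c {#restr P \<tau>#})"
  using char_eq_prod[OF assms(1) monomial_quot[OF assms(2,3)]]
  unfolding quot_def prod_mset_image_mset_set .

lemma conv_singleton: "conv a b {#P#} = (\<Sum>Q\<in>coarsenings P. a {#Q#} * b (quot P Q))"
  unfolding conv_def coarsenings_def by simp

lemma conv_eq_prod: "conv a b M = (\<Prod>P\<in>#M. conv a b {#P#})"
  unfolding conv_def by simp

lemma counit_eq_prod: "counit M = (\<Prod>P\<in>#M. counit {#P#})"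
  unfolding counit_def by simp

lemma prod_mset_cong_monomial:
  assumes "monomial M" "\<And>P. nc_gen P \<Longrightarrow> f P = g P"
  shows "(\<Prod>P\<in>#M. f P) = (\<Prod>P\<in>#M. g P)"
  using assms unfolding monomial_def by (intro arg_cong[where f = prod_mset] image_mset_cong) simp

lemma conv_cong:
  assumes "\<And>M. monomial M \<Longrightarrow> a M = a' M" "\<And>M. monomial M \<Longrightarrow> b M = b' M" "monomial M"
  shows "conv a b M = conv a' b' M"
  unfolding conv_eq_prod[of a b M] conv_eq_prod[of a' b' M]
proof (rule prod_mset_cong_monomial[OF assms(3)])
  fix P assume P: "nc_gen P"
  have "a {#Q#} * b (quot P Q) = a' {#Q#} * b' (quot P Q)" if Q: "Q \<in> coarsenings P" for Q
  proof -
    have "monomial {#Q#}"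
      using coarseningsD[OF Q] nc_genD[OF P] unfolding monomial_def nc_gen_def by auto
    moreover have "monomial (quot P Q)"
      using coarseningsD[OF Q] nc_genD[OF P] monomial_quot by blast
    ultimately show ?thesis
      using assms(1,2) by simp
  qed
  then show "conv a b {#P#} = conv a' b' {#P#}"
    unfolding conv_singleton by (rule sum.cong[OF refl])
qed

lemma quot_single_block: "NC n P \<Longrightarrow> quot P {{1..n}} = {#P#}"
  unfolding quot_def using restr_atLeastAtMost by simp

lemma conv_single_block:
  assumes "n \<ge> 1"
  shows "conv a b {#{{1..n}}#} = a {#{{1..n}}#} * b {#{{1..n}}#}"
  unfolding conv_singleton coarsenings_single_block[OF assms]
  using restr_atLeastAtMost[OF NC_single_block[OF assms]] by (simp add: quot_def)

lemma conv_counit_left: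
  assumes "nc_gen P"
  shows "conv counit \<chi> {#P#} = \<chi> {#P#}"
proof -
  let ?n = "psize P"
  have "conv counit \<chi> {#P#} = (\<Sum>Q\<in>coarsenings P. if Q = {{1..?n}} then \<chi> (quot P Q) else 0)"
    unfolding conv_singleton counit_def
    using NC_card_eq_1 coarseningsD by (intro sum.cong) auto
  also have "\<dots> = \<chi> (quot P {{1..?n}})"
    using single_block_in_coarsenings[OF assms] finite_coarsenings by simp
  finally show ?thesis
    using quot_single_block nc_genD[OF assms] by simp
qed

lemma eq_iff_card_finer_blocks:
  assumes "is_partition_on X P" "is_partition_on X Q" "refines P Q"
  shows "(\<forall>\<tau>\<in>Q. card {B\<in>P. B \<subseteq> \<tau>} = 1) \<longleftrightarrow> Q = P"
proof
  assume card: "\<forall>\<tau>\<in>Q. card {B\<in>P. B \<subseteq> \<tau>} = 1"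
  have Q_sub: "\<tau> \<in> P" if \<tau>: "\<tau> \<in> Q" for \<tau>
  proof -
    obtain B where "{B\<in>P. B \<subseteq> \<tau>} = {B}"
      using card \<tau> card_1_singletonE by blast
    moreover have "\<Union>{B\<in>P. B \<subseteq> \<tau>} = \<tau>"
      by (rule Union_finer_blocks[OF assms \<tau>])
    ultimately show ?thesis by auto
  qed
  moreover have "B \<in> Q" if B: "B \<in> P" for B
  proof -
    obtain C where C: "C \<in> Q" "B \<subseteq> C"
      using assms(3) B unfolding refines_def by blast
    obtain x where "x \<in> B"
      using is_partition_on_nonempty[OF assms(1) B] by blast
    then have "B = C"
      using C is_partition_on_eq[OF assms(1) B Q_sub[OF C(1)]] by blast
    with C show ?thesis by simp
  qed
  ultimately show "Q = P" by blast
next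
  assume "Q = P"
  have "{B\<in>P. B \<subseteq> \<tau>} = {\<tau>}" if \<tau>: "\<tau> \<in> P" for \<tau>
  proof -
    have "B = \<tau>" if "B \<in> P" "B \<subseteq> \<tau>" for B
      using that \<tau> is_partition_on_disjoint[OF assms(1)] is_partition_on_nonempty[OF assms(1)]
      by (metis Int_absorb2)
    then show ?thesis using \<tau> by blast
  qed
  with \<open>Q = P\<close> show "\<forall>\<tau>\<in>Q. card {B\<in>P. B \<subseteq> \<tau>} = 1" by simp
qed

lemma counit_quot:
  assumes "NC n P" "Q \<in> coarsenings P"
  shows "counit (quot P Q) = (if Q = P then 1 else 0)"
proof -
  have Q: "NC n Q" "refines P Q"
    using coarseningsD[OF assms(2)] psize_NC[OF assms(1)] by simp_all
  have "counit (quot P Q) = (\<Prod>\<tau>\<in>Q. if card {B\<in>P. B \<subseteq> \<tau>} = 1 then 1 else 0)"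
    unfolding counit_def quot_def prod_mset_image_mset_set
    using card_restr_coarser[OF NC_is_partition_on[OF assms(1)] NC_is_partition_on[OF Q(1)] Q(2)]
    by (intro prod.cong) simp_all
  also have "\<dots> = (if \<forall>\<tau>\<in>Q. card {B\<in>P. B \<subseteq> \<tau>} = 1 then 1 else 0)"
    using finite_NC[OF Q(1)] by (auto intro: prod_zero)
  finally show ?thesis
    unfolding eq_iff_card_finer_blocks[OF NC_is_partition_on[OF assms(1)] NC_is_partition_on[OF Q(1)] Q(2)] .
qed

lemma conv_counit_right:
  assumes "nc_gen P"
  shows "conv \<phi> counit {#P#} = \<phi> {#P#}"
proof -
  have "conv \<phi> counit {#P#} = (\<Sum>Q\<in>coarsenings P. if Q = P then \<phi> {#Q#} else 0)"
    unfolding conv_singleton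
    by (intro sum.cong) (simp_all add: counit_quot[OF conjunct1[OF nc_genD[OF assms]]])
  also have "\<dots> = \<phi> {#P#}"
    using self_in_coarsenings[OF assms] finite_coarsenings by simp
  finally show ?thesis .
qed

section \<open>Associativity\<close>

definition glue :: "nat set set \<Rightarrow> (nat set \<Rightarrow> nat set set) \<Rightarrow> nat set set" where
  "glue R F = (\<Union>\<rho>\<in>R. (`) (std_inv \<rho>) ` F \<rho>)"

definition restrs :: "nat set set \<Rightarrow> nat set set \<Rightarrow> nat set \<Rightarrow> nat set set" where
  "restrs R Q = (\<lambda>\<rho>\<in>R. restr Q \<rho>)"

lemma is_partition_on_std_inv_image:
  assumes "finite \<rho>" "is_partition_on {1..card \<rho>} S"
  shows "is_partition_on \<rho> ((`) (std_inv \<rho>) ` S)"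
  using is_partition_on_image[OF assms(2) strict_mono_on_imp_inj_on[OF strict_mono_on_std_inv[OF assms(1)]]]
  unfolding std_inv_image[OF assms(1)] .

lemma noncrossing_std_inv_image:
  assumes "finite \<rho>" "NC (card \<rho>) S"
  shows "noncrossing ((`) (std_inv \<rho>) ` S)"
  using NC_noncrossing[OF assms(2)] strict_mono_on_std_inv[OF assms(1)]
    is_partition_on_Union[OF NC_is_partition_on[OF assms(2)]]
  by (intro noncrossing_image) simp_all

context
  fixes n :: nat and R :: "nat set set" and F :: "nat set \<Rightarrow> nat set set"
  assumes R: "NC n R" and F: "\<And>\<rho>. \<rho> \<in> R \<Longrightarrow> NC (card \<rho>) (F \<rho>)"
begin

lemma glue_block_subset: "\<rho> \<in> R \<Longrightarrow> \<tau> \<in> (`) (std_inv \<rho>) ` F \<rho> \<Longrightarrow> \<tau> \<subseteq> \<rho>"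
  using is_partition_on_subset[OF is_partition_on_std_inv_image[OF NC_finite_block[OF R] NC_is_partition_on[OF F]]]
  by blast

lemma NC_glue: "NC n (glue R F)"
  unfolding NC_iff glue_def
proof
  show "is_partition_on {1..n} (\<Union>\<rho>\<in>R. (`) (std_inv \<rho>) ` F \<rho>)"
    using NC_is_partition_on[OF R] is_partition_on_std_inv_image[OF NC_finite_block[OF R] NC_is_partition_on[OF F]]
    by (rule is_partition_on_UN)
  show "noncrossing (\<Union>\<rho>\<in>R. (`) (std_inv \<rho>) ` F \<rho>)"
    using NC_noncrossing[OF R] noncrossing_std_inv_image[OF NC_finite_block[OF R] F] glue_block_subset
    by (rule noncrossing_UN)
qed

lemma glue_refines: "refines (glue R F) R"
  unfolding refines_def glue_def using glue_block_subset by blast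

lemma glue_blocks_within:
  assumes "\<rho> \<in> R"
  shows "{\<tau>\<in>glue R F. \<tau> \<subseteq> \<rho>} = (`) (std_inv \<rho>) ` F \<rho>"
proof (intro set_eqI iffI)
  fix \<tau> assume "\<tau> \<in> {\<tau>\<in>glue R F. \<tau> \<subseteq> \<rho>}"
  then obtain \<rho>' where \<rho>': "\<rho>' \<in> R" "\<tau> \<in> (`) (std_inv \<rho>') ` F \<rho>'" and "\<tau> \<subseteq> \<rho>"
    unfolding glue_def by blast
  have "\<tau> \<noteq> {}" "\<tau> \<subseteq> \<rho>'"
    using NC_nonempty[OF NC_glue] glue_block_subset[OF \<rho>'] \<rho>' unfolding glue_def by blast+
  with \<open>\<tau> \<subseteq> \<rho>\<close> have "\<rho>' = \<rho>"
    using is_partition_on_disjoint[OF NC_is_partition_on[OF R] \<rho>'(1) assms] by blast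
  with \<rho>' show "\<tau> \<in> (`) (std_inv \<rho>) ` F \<rho>" by simp
next
  fix \<tau> assume "\<tau> \<in> (`) (std_inv \<rho>) ` F \<rho>"
  then show "\<tau> \<in> {\<tau>\<in>glue R F. \<tau> \<subseteq> \<rho>}"
    using glue_block_subset[OF assms] assms unfolding glue_def by blast
qed

lemma restr_glue:
  assumes "\<rho> \<in> R"
  shows "restr (glue R F) \<rho> = F \<rho>"
proof -
  have "restr (glue R F) \<rho> = (`) (std \<rho>) ` (`) (std_inv \<rho>) ` F \<rho>"
    using restr_coarser[OF NC_is_partition_on[OF NC_glue] NC_is_partition_on[OF R] glue_refines assms]
    unfolding glue_blocks_within[OF assms] .
  also have "\<dots> = F \<rho>"
    using std_image_std_inv_image[OF NC_finite_block[OF R assms] NC_subset[OF F[OF assms]]]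
    by (simp add: image_image cong: image_cong)
  finally show ?thesis .
qed

lemma refines_glue:
  assumes P: "NC n P" "refines P R" and PF: "\<And>\<rho>. \<rho> \<in> R \<Longrightarrow> refines (restr P \<rho>) (F \<rho>)"
  shows "refines P (glue R F)"
  unfolding refines_def
proof
  fix B assume B: "B \<in> P"
  obtain \<rho> where \<rho>: "\<rho> \<in> R" "B \<subseteq> \<rho>"
    using P(2) B unfolding refines_def by blast
  have "std \<rho> ` B \<in> restr P \<rho>"
    using restr_coarser[OF NC_is_partition_on[OF P(1)] NC_is_partition_on[OF R] P(2) \<rho>(1)] B \<rho>(2)
    by blast
  then obtain \<sigma> where \<sigma>: "\<sigma> \<in> F \<rho>" "std \<rho> ` B \<subseteq> \<sigma>"
    using PF[OF \<rho>(1)] unfolding refines_def by blast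
  have "B = std_inv \<rho> ` std \<rho> ` B"
    using std_inv_image_std_image[OF NC_finite_block[OF R \<rho>(1)] \<rho>(2)] by simp
  also have "\<dots> \<subseteq> std_inv \<rho> ` \<sigma>"
    using \<sigma>(2) by (rule image_mono)
  finally show "\<exists>C\<in>glue R F. B \<subseteq> C"
    using \<rho>(1) \<sigma>(1) unfolding glue_def by blast
qed

end

lemma glue_restrs:
  assumes "NC n Q" "NC n R" "refines Q R"
  shows "glue R (restrs R Q) = Q"
proof -
  have "(`) (std_inv \<rho>) ` restr Q \<rho> = {\<tau>\<in>Q. \<tau> \<subseteq> \<rho>}" if \<rho>: "\<rho> \<in> R" for \<rho>
  proof -
    have "std_inv \<rho> ` std \<rho> ` \<tau> = \<tau>" if "\<tau> \<subseteq> \<rho>" for \<tau>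
      using NC_finite_block[OF assms(2) \<rho>] that by (rule std_inv_image_std_image)
    then show ?thesis
      unfolding restr_coarser[OF NC_is_partition_on[OF assms(1)] NC_is_partition_on[OF assms(2)] assms(3) \<rho>]
      by (force simp: image_image)
  qed
  then have "glue R (restrs R Q) = (\<Union>\<rho>\<in>R. {\<tau>\<in>Q. \<tau> \<subseteq> \<rho>})"
    unfolding glue_def restrs_def by simp
  also have "\<dots> = Q"
    using assms(3) unfolding refines_def by blast
  finally show ?thesis .
qed

lemma coarsenings_restr_iff:
  "NC n P \<Longrightarrow> \<rho> \<subseteq> {1..n} \<Longrightarrow> S \<in> coarsenings (restr P \<rho>) \<longleftrightarrow> NC (card \<rho>) S \<and> refines (restr P \<rho>) S"
  unfolding coarsenings_def by (simp add: psize_restr)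

lemma PiE_coarsenings_restrD:
  assumes "NC n P" "NC n R" "F \<in> (\<Pi>\<^sub>E \<rho>\<in>R. coarsenings (restr P \<rho>))" "\<rho> \<in> R"
  shows "NC (card \<rho>) (F \<rho>)" "refines (restr P \<rho>) (F \<rho>)"
  using assms(3,4) coarsenings_restr_iff[OF assms(1) NC_subset[OF assms(2,4)]] by (auto simp: PiE_iff)

lemma restrs_in_PiE:
  assumes P: "NC n P" and R: "NC n R" and Q: "Q \<in> coarsenings P"
  shows "restrs R Q \<in> (\<Pi>\<^sub>E \<rho>\<in>R. coarsenings (restr P \<rho>))"
proof -
  have Q: "NC n Q" "refines P Q"
    using coarseningsD[OF Q] psize_NC[OF P] by simp_all
  have "restr Q \<rho> \<in> coarsenings (restr P \<rho>)" if \<rho>: "\<rho> \<in> R" for \<rho>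
    unfolding coarsenings_restr_iff[OF P NC_subset[OF R \<rho>]]
    using NC_restr[OF Q(1) NC_subset[OF R \<rho>]] refines_restr[OF Q(2)] by simp
  then show ?thesis
    unfolding restrs_def restrict_PiE_iff by simp
qed

lemma glue_in_coarsenings:
  assumes P: "NC n P" and R: "NC n R" "refines P R" and F: "F \<in> (\<Pi>\<^sub>E \<rho>\<in>R. coarsenings (restr P \<rho>))"
  shows "glue R F \<in> coarsenings P" "refines (glue R F) R"
proof -
  have F_NC: "\<And>\<rho>. \<rho> \<in> R \<Longrightarrow> NC (card \<rho>) (F \<rho>)"
    and F_refines: "\<And>\<rho>. \<rho> \<in> R \<Longrightarrow> refines (restr P \<rho>) (F \<rho>)"
    using PiE_coarsenings_restrD[OF P R(1) F] by simp_all
  have "NC n (glue R F)"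
    using R(1) F_NC by (rule NC_glue)
  moreover have "refines P (glue R F)"
    using R(1) F_NC P R(2) F_refines by (rule refines_glue)
  ultimately show "glue R F \<in> coarsenings P"
    unfolding coarsenings_def psize_NC[OF P] by simp
  show "refines (glue R F) R"
    using R(1) F_NC by (rule glue_refines)
qed

lemma bij_betw_restrs:
  assumes P: "NC n P" and R: "NC n R" "refines P R"
  shows "bij_betw (restrs R) {Q\<in>coarsenings P. refines Q R} (\<Pi>\<^sub>E \<rho>\<in>R. coarsenings (restr P \<rho>))"
proof (rule bij_betw_byWitness[where f' = "glue R"])
  show "\<forall>Q\<in>{Q\<in>coarsenings P. refines Q R}. glue R (restrs R Q) = Q"
    using glue_restrs[OF _ R(1)] coarseningsD psize_NC[OF P] by auto
  show "\<forall>F\<in>\<Pi>\<^sub>E \<rho>\<in>R. coarsenings (restr P \<rho>). restrs R (glue R F) = F"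
  proof (intro ballI ext)
    fix F \<rho> assume F: "F \<in> (\<Pi>\<^sub>E \<rho>\<in>R. coarsenings (restr P \<rho>))"
    show "restrs R (glue R F) \<rho> = F \<rho>"
      using restr_glue[OF R(1) PiE_coarsenings_restrD(1)[OF P R(1) F]] PiE_arb[OF F]
      unfolding restrs_def by simp
  qed
  show "restrs R ` {Q\<in>coarsenings P. refines Q R} \<subseteq> (\<Pi>\<^sub>E \<rho>\<in>R. coarsenings (restr P \<rho>))"
    using restrs_in_PiE[OF P R(1)] by blast
  show "glue R ` (\<Pi>\<^sub>E \<rho>\<in>R. coarsenings (restr P \<rho>)) \<subseteq> {Q\<in>coarsenings P. refines Q R}"
    using glue_in_coarsenings[OF P R] by blast
qed

lemma prod_regroup:
  assumes Q: "NC n Q" and R: "NC n R" and QR: "refines Q R"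
  shows "(\<Prod>\<tau>\<in>Q. f (restr P \<tau>)) = (\<Prod>\<rho>\<in>R. \<Prod>\<sigma>\<in>restr Q \<rho>. f (restr (restr P \<rho>) \<sigma>))"
proof -
  have Q_UN: "Q = (\<Union>\<rho>\<in>R. {\<tau>\<in>Q. \<tau> \<subseteq> \<rho>})"
    using QR unfolding refines_def by blast
  have disjoint: "\<forall>\<rho>\<in>R. \<forall>\<rho>'\<in>R. \<rho> \<noteq> \<rho>' \<longrightarrow> {\<tau>\<in>Q. \<tau> \<subseteq> \<rho>} \<inter> {\<tau>\<in>Q. \<tau> \<subseteq> \<rho>'} = {}"
  proof (intro ballI impI)
    fix \<rho> \<rho>' assume "\<rho> \<in> R" "\<rho>' \<in> R" "\<rho> \<noteq> \<rho>'"
    then have "\<rho> \<inter> \<rho>' = {}"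
      by (rule is_partition_on_disjoint[OF NC_is_partition_on[OF R]])
    then show "{\<tau>\<in>Q. \<tau> \<subseteq> \<rho>} \<inter> {\<tau>\<in>Q. \<tau> \<subseteq> \<rho>'} = {}"
      using NC_nonempty[OF Q] by blast
  qed
  have "(\<Prod>\<tau>\<in>Q. f (restr P \<tau>)) = (\<Prod>\<rho>\<in>R. \<Prod>\<tau>\<in>{\<tau>\<in>Q. \<tau> \<subseteq> \<rho>}. f (restr P \<tau>))"
    by (subst Q_UN, rule prod.UNION_disjoint) (use finite_NC[OF R] finite_NC[OF Q] disjoint in auto)
  also have "\<dots> = (\<Prod>\<rho>\<in>R. \<Prod>\<sigma>\<in>restr Q \<rho>. f (restr (restr P \<rho>) \<sigma>))"
  proof (rule prod.cong[OF refl])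
    fix \<rho> assume \<rho>: "\<rho> \<in> R"
    have fin: "finite \<rho>"
      by (rule NC_finite_block[OF R \<rho>])
    have inj: "inj_on ((`) (std \<rho>)) {\<tau>\<in>Q. \<tau> \<subseteq> \<rho>}"
      by (rule inj_on_subset[OF inj_on_image_Pow[OF inj_on_std[OF fin]]]) blast
    have "(\<Prod>\<sigma>\<in>restr Q \<rho>. f (restr (restr P \<rho>) \<sigma>))
        = (\<Prod>\<tau>\<in>{\<tau>\<in>Q. \<tau> \<subseteq> \<rho>}. f (restr (restr P \<rho>) (std \<rho> ` \<tau>)))"
      unfolding restr_coarser[OF NC_is_partition_on[OF Q] NC_is_partition_on[OF R] QR \<rho>]
      by (rule prod.reindex[OF inj, unfolded comp_def])
    also have "\<dots> = (\<Prod>\<tau>\<in>{\<tau>\<in>Q. \<tau> \<subseteq> \<rho>}. f (restr P \<tau>))"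
      by (rule prod.cong[OF refl]) (simp add: restr_restr[OF fin])
    finally show "(\<Prod>\<tau>\<in>{\<tau>\<in>Q. \<tau> \<subseteq> \<rho>}. f (restr P \<tau>)) = (\<Prod>\<sigma>\<in>restr Q \<rho>. f (restr (restr P \<rho>) \<sigma>))"
      by simp
  qed
  finally show ?thesis .
qed

lemma prod_char_quot_restr:
  fixes b c :: "nat set set multiset \<Rightarrow> 'a::field_char_0"
  assumes b: "is_char b" and c: "is_char c" and P: "NC n P" and Q: "NC n Q" and R: "NC n R"
    and QR: "refines Q R"
  shows "(\<Prod>\<rho>\<in>R. b {#restr Q \<rho>#} * c (quot (restr P \<rho>) (restr Q \<rho>))) = b (quot Q R) * c (quot P Q)"
proof -
  have "(\<Prod>\<rho>\<in>R. c (quot (restr P \<rho>) (restr Q \<rho>)))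
      = (\<Prod>\<rho>\<in>R. \<Prod>\<sigma>\<in>restr Q \<rho>. c {#restr (restr P \<rho>) \<sigma>#})"
  proof (rule prod.cong[OF refl])
    fix \<rho> assume "\<rho> \<in> R"
    then have "\<rho> \<subseteq> {1..n}"
      by (rule NC_subset[OF R])
    show "c (quot (restr P \<rho>) (restr Q \<rho>)) = (\<Prod>\<sigma>\<in>restr Q \<rho>. c {#restr (restr P \<rho>) \<sigma>#})"
      by (rule char_quot[OF c NC_restr[OF P \<open>\<rho> \<subseteq> {1..n}\<close>] NC_restr[OF Q \<open>\<rho> \<subseteq> {1..n}\<close>]])
  qed
  also have "\<dots> = c (quot P Q)"
    unfolding char_quot[OF c P Q] by (rule prod_regroup[OF Q R QR, symmetric])
  finally show ?thesis
    using char_quot[OF b Q R] by (simp add: prod.distrib)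
qed

lemma conv_quot:
  fixes b c :: "nat set set multiset \<Rightarrow> 'a::field_char_0"
  assumes b: "is_char b" and c: "is_char c" and P: "NC n P" and R: "R \<in> coarsenings P"
  shows "conv b c (quot P R) = (\<Sum>Q\<in>{Q\<in>coarsenings P. refines Q R}. b (quot Q R) * c (quot P Q))"
proof -
  have RN: "NC n R" and PR: "refines P R"
    using coarseningsD[OF R] psize_NC[OF P] by simp_all
  let ?g = "\<lambda>F. \<Prod>\<rho>\<in>R. b {#F \<rho>#} * c (quot (restr P \<rho>) (F \<rho>))"
  have "conv b c (quot P R) = (\<Prod>\<rho>\<in>R. \<Sum>S\<in>coarsenings (restr P \<rho>). b {#S#} * c (quot (restr P \<rho>) S))"
    by (simp only: conv_eq_prod[of b c "quot P R"]) (simp add: quot_def prod_mset_image_mset_set conv_singleton)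
  also have "\<dots> = (\<Sum>F\<in>(\<Pi>\<^sub>E \<rho>\<in>R. coarsenings (restr P \<rho>)). ?g F)"
    by (rule prod_sum_PiE[OF finite_NC[OF RN] finite_coarsenings])
  also have "\<dots> = (\<Sum>Q\<in>{Q\<in>coarsenings P. refines Q R}. ?g (restrs R Q))"
    by (rule sum.reindex_bij_betw[OF bij_betw_restrs[OF P RN PR], symmetric])
  also have "\<dots> = (\<Sum>Q\<in>{Q\<in>coarsenings P. refines Q R}. b (quot Q R) * c (quot P Q))"
  proof (rule sum.cong[OF refl])
    fix Q assume "Q \<in> {Q\<in>coarsenings P. refines Q R}"
    then have Q: "NC n Q" "refines Q R"
      using coarseningsD[of Q P] psize_NC[OF P] by simp_all
    have "?g (restrs R Q) = (\<Prod>\<rho>\<in>R. b {#restr Q \<rho>#} * c (quot (restr P \<rho>) (restr Q \<rho>)))"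
      unfolding restrs_def by (rule prod.cong) simp_all
    then show "?g (restrs R Q) = b (quot Q R) * c (quot P Q)"
      using prod_char_quot_restr[OF b c P Q(1) RN Q(2)] by simp
  qed
  finally show ?thesis .
qed

lemma conv_assoc_singleton:
  fixes a b c :: "nat set set multiset \<Rightarrow> 'a::field_char_0"
  assumes b: "is_char b" and c: "is_char c" and P: "nc_gen P"
  shows "conv (conv a b) c {#P#} = conv a (conv b c) {#P#}"
proof -
  have PN: "NC (psize P) P"
    using nc_genD[OF P] by simp
  have "conv (conv a b) c {#P#}
      = (\<Sum>Q\<in>coarsenings P. \<Sum>R\<in>{R\<in>coarsenings P. refines Q R}. a {#R#} * (b (quot Q R) * c (quot P Q)))"
    unfolding conv_singleton[of "conv a b"] conv_singleton[of a]
    by (intro sum.cong refl) (simp add: coarsenings_of_coarsening sum_distrib_right mult.assoc)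
  also have "\<dots> = (\<Sum>R\<in>coarsenings P. \<Sum>Q\<in>{Q\<in>coarsenings P. refines Q R}. a {#R#} * (b (quot Q R) * c (quot P Q)))"
    by (rule sum.swap_restrict[OF finite_coarsenings finite_coarsenings])
  also have "\<dots> = (\<Sum>R\<in>coarsenings P. a {#R#} * conv b c (quot P R))"
    by (intro sum.cong refl) (simp add: conv_quot[OF b c PN] sum_distrib_left)
  also have "\<dots> = conv a (conv b c) {#P#}"
    unfolding conv_singleton ..
  finally show ?thesis .
qed

lemma conv_assoc:
  assumes "is_char b" "is_char c" "monomial M"
  shows "conv (conv a b) c M = conv a (conv b c) M"
  unfolding conv_eq_prod[of "conv a b" c M] conv_eq_prod[of a "conv b c" M]
  using conv_assoc_singleton[OF assms(1,2)] by (rule prod_mset_cong_monomial[OF assms(3)])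

section \<open>A right inverse\<close>

lemma psize_restr_less:
  assumes "Q \<in> coarsenings P" "Q \<noteq> {{1..psize P}}" "\<tau> \<in> Q"
  shows "psize (restr P \<tau>) < psize P"
proof -
  have Q: "NC (psize P) Q"
    using coarseningsD[OF assms(1)] by simp
  then have "\<tau> \<subset> {1..psize P}"
    using NC_subset[OF Q assms(3)] NC_eq_single_block[OF Q assms(3)] assms(2) by blast
  then have "card \<tau> < psize P"
    using psubset_card_mono[of "{1..psize P}" \<tau>] by simp
  moreover have "finite \<tau>"
    by (rule NC_finite_block[OF Q assms(3)])
  ultimately show ?thesis
    using psize_restr_le le_less_trans by blast
qed

text \<open>
  Solving \<open>(\<phi> * \<psi>)(P) = \<epsilon>(P)\<close> for \<open>\<psi>(P)\<close>: the one-block coarsening contributes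
  \<open>\<phi>(I\<^sub>n) \<psi>(P)\<close>, all other coarsenings only involve \<psi> on smaller partitions.
\<close>
function conv_inv_gen :: "(nat set set multiset \<Rightarrow> 'a::field_char_0) \<Rightarrow> nat set set \<Rightarrow> 'a" where
  "conv_inv_gen \<phi> P =
    (counit {#P#} - (\<Sum>Q\<in>coarsenings P - {{{1..psize P}}}. \<phi> {#Q#} * (\<Prod>\<tau>\<in>Q. conv_inv_gen \<phi> (restr P \<tau>))))
      / \<phi> {#{{1..psize P}}#}"
  by auto
termination
  by (relation "measure (\<lambda>(\<phi>, P). psize P)") (auto intro: psize_restr_less)

declare conv_inv_gen.simps [simp del]

definition conv_inv :: "(nat set set multiset \<Rightarrow> 'a::field_char_0) \<Rightarrow> nat set set multiset \<Rightarrow> 'a" where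
  "conv_inv \<phi> M = (\<Prod>P\<in>#M. conv_inv_gen \<phi> P)"

lemma conv_inv_quot: "conv_inv \<phi> (quot P Q) = (\<Prod>\<tau>\<in>Q. conv_inv_gen \<phi> (restr P \<tau>))"
  unfolding conv_inv_def quot_def prod_mset_image_mset_set ..

lemma is_char_conv_inv: "is_char (conv_inv \<phi>)"
  unfolding is_char_def conv_inv_def by simp

lemma conv_conv_inv_singleton:
  assumes nonzero: "\<forall>n\<ge>1. \<phi> {#{{1..n}}#} \<noteq> 0" and P: "nc_gen P"
  shows "conv \<phi> (conv_inv \<phi>) {#P#} = counit {#P#}"
proof -
  let ?T = "{{1..psize P}}"
  define S where "S = (\<Sum>Q\<in>coarsenings P - {?T}. \<phi> {#Q#} * conv_inv \<phi> (quot P Q))"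
  have "conv \<phi> (conv_inv \<phi>) {#P#} = \<phi> {#?T#} * conv_inv \<phi> (quot P ?T) + S"
    unfolding conv_singleton S_def
    using sum.remove[OF finite_coarsenings single_block_in_coarsenings[OF P]] by simp
  also have "conv_inv \<phi> (quot P ?T) = (counit {#P#} - S) / \<phi> {#?T#}"
    unfolding S_def conv_inv_quot quot_single_block[OF conjunct1[OF nc_genD[OF P]]]
    by (simp add: conv_inv_def conv_inv_gen.simps[of \<phi> P])
  finally show ?thesis
    using nonzero nc_genD[OF P] by simp
qed

lemma conv_conv_inv:
  assumes "\<forall>n\<ge>1. \<phi> {#{{1..n}}#} \<noteq> 0" "monomial M"
  shows "conv \<phi> (conv_inv \<phi>) M = counit M"
  unfolding conv_eq_prod[of _ _ M] counit_eq_prod[of M]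
  using conv_conv_inv_singleton[OF assms(1)] by (rule prod_mset_cong_monomial[OF assms(2)])

lemma monomial_single_block: "n \<ge> 1 \<Longrightarrow> monomial {#{{1..n}}#}"
  unfolding monomial_def nc_gen_def using NC_single_block by auto

lemma right_inverse_single_block:
  assumes "conv \<phi> \<psi> {#{{1..n}}#} = counit {#{{1..n}}#}" "n \<ge> 1"
  shows "\<phi> {#{{1..n}}#} * \<psi> {#{{1..n}}#} = 1"
  using assms conv_single_block[OF assms(2), of \<phi> \<psi>] by (simp add: counit_def)

lemma conv_counit_right_monomial:
  assumes "is_char \<phi>" "monomial M"
  shows "conv \<phi> counit M = \<phi> M"
  unfolding conv_eq_prod[of _ _ M] char_eq_prod[OF assms]
  using conv_counit_right by (rule prod_mset_cong_monomial[OF assms(2)])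

lemma conv_counit_left_monomial:
  assumes "is_char \<chi>" "monomial M"
  shows "conv counit \<chi> M = \<chi> M"
  unfolding conv_eq_prod[of _ _ M] char_eq_prod[OF assms]
  using conv_counit_left by (rule prod_mset_cong_monomial[OF assms(2)])

lemma left_inverse_eq_right_inverse:
  assumes "is_char \<phi>" "is_char \<psi>" "is_char \<chi>"
    and \<phi>\<psi>: "\<And>M. monomial M \<Longrightarrow> conv \<phi> \<psi> M = counit M"
    and \<psi>\<chi>: "\<And>M. monomial M \<Longrightarrow> conv \<psi> \<chi> M = counit M"
    and M: "monomial M"
  shows "\<phi> M = \<chi> M"
proof -
  have "\<phi> M = conv \<phi> counit M"
    by (rule conv_counit_right_monomial[OF assms(1) M, symmetric])
  also have "\<dots> = conv \<phi> (conv \<psi> \<chi>) M"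
    using \<psi>\<chi> by (intro conv_cong[OF _ _ M]) simp_all
  also have "\<dots> = conv (conv \<phi> \<psi>) \<chi> M"
    by (rule conv_assoc[OF assms(2,3) M, symmetric])
  also have "\<dots> = conv counit \<chi> M"
    using \<phi>\<psi> by (intro conv_cong[OF _ _ M]) simp_all
  also have "\<dots> = \<chi> M"
    by (rule conv_counit_left_monomial[OF assms(3) M])
  finally show ?thesis .
qed

theorem mainTheorem9:
  fixes \<phi> :: "nat set set multiset \<Rightarrow> 'a::field_char_0"
  assumes "is_char \<phi>"
  shows "char_invertible \<phi> \<longleftrightarrow> (\<forall>n::nat\<ge>1. \<phi> {#{{1..n}}#} \<noteq> 0)"
proof
  assume "char_invertible \<phi>"
  then obtain \<psi> where "\<And>M. monomial M \<Longrightarrow> conv \<phi> \<psi> M = counit M"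
    unfolding char_invertible_def by blast
  then show "\<forall>n::nat\<ge>1. \<phi> {#{{1..n}}#} \<noteq> 0"
    using right_inverse_single_block monomial_single_block by fastforce
next
  assume nonzero: "\<forall>n::nat\<ge>1. \<phi> {#{{1..n}}#} \<noteq> 0"
  define \<psi> where "\<psi> = conv_inv \<phi>"
  have \<phi>\<psi>: "conv \<phi> \<psi> M = counit M" if "monomial M" for M
    unfolding \<psi>_def using nonzero that by (rule conv_conv_inv)
  then have "\<forall>n::nat\<ge>1. \<psi> {#{{1..n}}#} \<noteq> 0"
    using right_inverse_single_block monomial_single_block by fastforce
  then have \<psi>\<chi>: "conv \<psi> (conv_inv \<psi>) M = counit M" if "monomial M" for M
    using that by (rule conv_conv_inv)
  have "conv \<psi> \<phi> M = counit M" if M: "monomial M" for M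
  proof -
    have "\<phi> N = conv_inv \<psi> N" if "monomial N" for N
      using assms is_char_conv_inv is_char_conv_inv \<phi>\<psi> \<psi>\<chi> that
      unfolding \<psi>_def by (rule left_inverse_eq_right_inverse)
    then show ?thesis
      using \<psi>\<chi>[OF M] conv_cong[OF _ _ M, of \<psi> \<psi> \<phi> "conv_inv \<psi>"] by simp
  qed
  with \<phi>\<psi> show "char_invertible \<phi>"
    unfolding char_invertible_def \<psi>_def using is_char_conv_inv by blast
qed

end
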